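(* Let $X$ be a nontrivial real Hausdorff locally convex space and let $g\in\Gamma(X)$ be sublinear. For $x^{\ast}\in X^{\ast}$ set $L_{x^{\ast}}:=\{x\in X: g(x)=\langle x,x^{\ast}\rangle \text{ and } g(-x)=-\langle x,x^{\ast}\rangle\}$. Then: (a) For every $x^{\ast}\in X^{\ast}$, $L_{x^{\ast}}$ is a closed linear subspace of $X$, $$L_{x^{\ast}}=\{x\in X: g(x)\le\langle x,x^{\ast}\rangle,\ g(-x)\le-\langle x,x^{\ast}\rangle\}=[\partial g(0)-x^{\ast}]^{\perp},$$ and $g(x+u)=g(x)+\langle u,x^{\ast}\rangle$ for all $x\in X$ and $u\in L_{x^{\ast}}$. (b) If $u^{\ast}\in\partial g(0)$, then $L_{u^{\ast}}=[\partial g(0)-\partial g(0)]^{\perp}$. Consequently, $L_{x^{\ast}}\subset L_{u^{\ast}}$ for all $x^{\ast}\in X^{\ast}$ and $u^{\ast}\in\partial g(0)$; in particular $L_{u^{\ast}}=L_{v^{\ast}}$ for all $u^{\ast},v^{\ast}\in\partial g(0)$.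
   Context: $X^{\ast}$ is the topological dual of $X$ (weak$^{\ast}$ topology), $\langle x,x^{\ast}\rangle:=x^{\ast}(x)$. $\Gamma(X)$ is the set of proper lower semicontinuous convex functions $X\to\mathbb{R}\cup\{\pm\infty\}$. $\partial g(0)=\{x^{\ast}\in X^{\ast}:\langle x',x^{\ast}\rangle\le g(x')\ \forall x'\in X\}$. For $B\subset X^{\ast}$, $B^{\perp}=\{x\in X:\langle x,x^{\ast}\rangle=0\ \forall x^{\ast}\in B\}$; $\partial g(0)-x^{\ast}$ and $\partial g(0)-\partial g(0)$ are algebraic (Minkowski) differences. *)

theory Defs
  imports "HOL-Analysis.Analysis"
begin

definition hlcs :: "'a::real_vector topology \<Rightarrow> bool" where
  "hlcs T \<longleftrightarrow> topspace T = UNIV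
    \<and> continuous_map (prod_topology T T) T (\<lambda>(x, y). x + y)
    \<and> continuous_map (prod_topology euclideanreal T) T (\<lambda>(t, x). t *\<^sub>R x)
    \<and> Hausdorff_space T
    \<and> (\<forall>U. openin T U \<and> 0 \<in> U \<longrightarrow> (\<exists>V. openin T V \<and> convex V \<and> 0 \<in> V \<and> V \<subseteq> U))"

definition tdual :: "'a::real_vector topology \<Rightarrow> ('a \<Rightarrow> real) set" where
  "tdual T = {f. linear f \<and> continuous_map T euclideanreal f}"

definition proper_fun :: "('a \<Rightarrow> ereal) \<Rightarrow> bool" where
  "proper_fun g \<longleftrightarrow> (\<forall>x. g x \<noteq> -\<infinity>) \<and> (\<exists>x. g x \<noteq> \<infinity>)"

definition lsc_fun :: "'a topology \<Rightarrow> ('a \<Rightarrow> ereal) \<Rightarrow> bool" where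
  "lsc_fun T g \<longleftrightarrow> (\<forall>c::real. closedin T {x \<in> topspace T. g x \<le> ereal c})"

definition convex_efun :: "('a::real_vector \<Rightarrow> ereal) \<Rightarrow> bool" where
  "convex_efun g \<longleftrightarrow> (\<forall>x y. \<forall>t::real. 0 \<le> t \<and> t \<le> 1 \<longrightarrow>
      g (t *\<^sub>R x + (1 - t) *\<^sub>R y) \<le> ereal t * g x + ereal (1 - t) * g y)"

definition Gamma :: "'a::real_vector topology \<Rightarrow> ('a \<Rightarrow> ereal) set" where
  "Gamma T = {g. proper_fun g \<and> lsc_fun T g \<and> convex_efun g}"

definition sublinear :: "('a::real_vector \<Rightarrow> ereal) \<Rightarrow> bool" where
  "sublinear g \<longleftrightarrow> (\<forall>x. \<forall>t::real. t > 0 \<longrightarrow> g (t *\<^sub>R x) = ereal t * g x)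
                 \<and> (\<forall>x y. g (x + y) \<le> g x + g y)"

definition subdiff0 :: "'a::real_vector topology \<Rightarrow> ('a \<Rightarrow> ereal) \<Rightarrow> ('a \<Rightarrow> real) set" where
  "subdiff0 T g = {xs \<in> tdual T. \<forall>x. ereal (xs x) \<le> g x}"

definition perp :: "('a \<Rightarrow> real) set \<Rightarrow> 'a set" where
  "perp B = {x. \<forall>b\<in>B. b x = 0}"

definition Lset :: "('a::real_vector \<Rightarrow> ereal) \<Rightarrow> ('a \<Rightarrow> real) \<Rightarrow> 'a set" where
  "Lset g xs = {x. g x = ereal (xs x) \<and> g (- x) = ereal (- xs x)}"

end

theory Submission
  imports Defs
begin

text \<open>
  Everything rests on the representation \<open>g x = sup {\<langle>x, u\<rangle> | u \<in> \<partial>g(0)}\<close> of a lower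
  semicontinuous sublinear \<open>g\<close>. To obtain it, a point \<open>(x, r)\<close> with \<open>r < g x\<close> is separated
  from the epigraph of \<open>g\<close>, a convex cone in \<open>X \<times> \<real>\<close>: thickening the cone by a convex open
  neighbourhood that still misses \<open>(x, r)\<close> yields an absorbing convex set, and the algebraic
  Hahn-Banach theorem applied to its Minkowski functional gives a linear functional which is
  bounded on a neighbourhood of \<open>0\<close>, hence continuous. With the representation at hand,
  \<open>x \<in> L\<^sub>x\<^sub>*\<close> holds iff \<open>\<langle>x, u\<rangle> = \<langle>x, x\<^sup>*\<rangle>\<close> for all \<open>u \<in> \<partial>g(0)\<close>, which is the
  description of \<open>L\<^sub>x\<^sub>*\<close> as an annihilator; all remaining claims follow from it, except the
  translation formula, which is subadditivity applied to \<open>x + u\<close> and to \<open>(x + u) - u\<close>.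
\<close>

section \<open>Hahn-Banach extension\<close>

text \<open>For a subspace \<open>G\<close> of \<open>X \<times> \<real>\<close>, being the graph of a function amounts to
  \<open>(0, a) \<in> G \<Longrightarrow> a = 0\<close>.\<close>

definition dominated_linear_graph :: "('a::real_vector \<Rightarrow> real) \<Rightarrow> ('a \<times> real) set \<Rightarrow> bool" where
  "dominated_linear_graph p G \<longleftrightarrow>
     subspace G \<and> (\<forall>a. (0, a) \<in> G \<longrightarrow> a = 0) \<and> (\<forall>(x, a) \<in> G. a \<le> p x)"

lemma dominated_linear_graph_functional:
  assumes "dominated_linear_graph p G" "(x, a) \<in> G" "(x, b) \<in> G"
  shows "a = b"
proof -
  have "(x, a) - (x, b) \<in> G"
    using assms subspace_diff unfolding dominated_linear_graph_def by blast
  then show ?thesis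
    using assms(1) unfolding dominated_linear_graph_def by auto
qed

lemma dominated_linear_graph_extension_constant:
  fixes p :: "'a::real_vector \<Rightarrow> real"
  assumes subadd: "\<And>x y. p (x + y) \<le> p x + p y" and G: "dominated_linear_graph p G"
  obtains c where "\<And>y b. (y, b) \<in> G \<Longrightarrow> b - p (y - z) \<le> c"
    "\<And>y b. (y, b) \<in> G \<Longrightarrow> c \<le> p (y + z) - b"
proof -
  have sG: "subspace G" and below: "\<And>x a. (x, a) \<in> G \<Longrightarrow> a \<le> p x"
    using G unfolding dominated_linear_graph_def by auto
  have gap: "b - p (y - z) \<le> p (y' + z) - b'" if "(y, b) \<in> G" "(y', b') \<in> G" for y b y' b'
  proof -
    have "b + b' \<le> p (y + y')"
      using below subspace_add[OF sG that] by simp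
    also have "\<dots> \<le> p (y - z) + p (y' + z)"
      using subadd[of "y - z" "y' + z"] by simp
    finally show ?thesis by linarith
  qed
  have zero: "(0, 0) \<in> G" using subspace_0[OF sG] by (simp add: zero_prod_def)
  have bdd: "bdd_above ((\<lambda>(y, b). b - p (y - z)) ` G)"
    using gap[OF _ zero] by (force simp: bdd_above_def)
  show ?thesis
  proof (rule that)
    show "b - p (y - z) \<le> (SUP (y, b)\<in>G. b - p (y - z))" if "(y, b) \<in> G" for y b
      using cSUP_upper[OF that bdd] by simp
    show "(SUP (y, b)\<in>G. b - p (y - z)) \<le> p (y + z) - b" if "(y, b) \<in> G" for y b
      using gap[OF _ that] zero by (intro cSUP_least) auto
  qed
qed

lemma dominated_extension_step:
  fixes p :: "'a::real_vector \<Rightarrow> real"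
  assumes hom: "\<And>t x. 0 < t \<Longrightarrow> p (t *\<^sub>R x) = t * p x" and G: "dominated_linear_graph p G"
    and c_lower: "\<And>y b. (y, b) \<in> G \<Longrightarrow> b - p (y - z) \<le> c"
    and c_upper: "\<And>y b. (y, b) \<in> G \<Longrightarrow> c \<le> p (y + z) - b"
    and xa: "(x, a) \<in> G"
  shows "a + t * c \<le> p (x + t *\<^sub>R z)"
proof -
  have sG: "subspace G" and below: "\<And>x a. (x, a) \<in> G \<Longrightarrow> a \<le> p x"
    using G unfolding dominated_linear_graph_def by auto
  consider "t = 0" | "t > 0" | "t < 0" by linarith
  then show ?thesis
  proof cases
    case 1
    then show ?thesis using xa below by simp
  next
    case 2
    have "c \<le> p (inverse t *\<^sub>R x + z) - inverse t * a"
      using c_upper subspace_scale[OF sG xa, of "inverse t"] by simp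
    then have "t * c \<le> t * p (inverse t *\<^sub>R x + z) - a"
      using 2 by (simp add: field_simps)
    also have "t * p (inverse t *\<^sub>R x + z) = p (x + t *\<^sub>R z)"
      using hom[OF 2, of "inverse t *\<^sub>R x + z"] 2 by (simp add: scaleR_add_right)
    finally show ?thesis by simp
  next
    case 3
    have "- inverse t * a - p (- inverse t *\<^sub>R x - z) \<le> c"
      using c_lower subspace_scale[OF sG xa, of "- inverse t"] by simp
    then have "a - (- t) * p (- inverse t *\<^sub>R x - z) \<le> - t * c"
      using 3 by (simp add: field_simps)
    also have "(- t) * p (- inverse t *\<^sub>R x - z) = p (x + t *\<^sub>R z)"
      using hom[of "- t" "- inverse t *\<^sub>R x - z"] 3 by (simp add: scaleR_diff_right)
    finally show ?thesis by simp
  qed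
qed

lemma dominated_linear_graph_extend:
  fixes p :: "'a::real_vector \<Rightarrow> real"
  assumes subadd: "\<And>x y. p (x + y) \<le> p x + p y"
    and hom: "\<And>t x. 0 < t \<Longrightarrow> p (t *\<^sub>R x) = t * p x"
    and G: "dominated_linear_graph p G" and z: "\<forall>a. (z, a) \<notin> G"
  shows "\<exists>G'. dominated_linear_graph p G' \<and> G \<subset> G'"
proof -
  have sG: "subspace G" and G0: "\<And>a. (0, a) \<in> G \<Longrightarrow> a = 0"
    using G unfolding dominated_linear_graph_def by auto
  obtain c where c: "\<And>y b. (y, b) \<in> G \<Longrightarrow> b - p (y - z) \<le> c"
    "\<And>y b. (y, b) \<in> G \<Longrightarrow> c \<le> p (y + z) - b"
    using dominated_linear_graph_extension_constant[OF subadd G] by blast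
  define G' where "G' = {u + v | u v. u \<in> G \<and> v \<in> span {(z, c)}}"
  have G'_iff: "w \<in> G' \<longleftrightarrow> (\<exists>x a t. (x, a) \<in> G \<and> w = (x + t *\<^sub>R z, a + t * c))" for w
    unfolding G'_def span_singleton by force
  have "subspace G'"
    unfolding G'_def by (intro subspace_sums sG subspace_span)
  moreover have "a = 0" if a: "(0, a) \<in> G'" for a
  proof -
    obtain x a' t where "(x, a') \<in> G" "(0, a) = (x + t *\<^sub>R z, a' + t * c)"
      using a G'_iff by blast
    then have xa: "(x, a') \<in> G" "x + t *\<^sub>R z = 0" "a = a' + t * c" by auto
    show ?thesis
    proof (cases "t = 0")
      case True
      then show ?thesis using xa G0 by simp
    next
      case False
      have "(- inverse t) *\<^sub>R (x, a') \<in> G" using subspace_scale[OF sG xa(1)] by blast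
      moreover have "(- inverse t) *\<^sub>R x = z"
        using xa(2) False by (simp add: eq_neg_iff_add_eq_0[symmetric])
      ultimately show ?thesis using z by simp
    qed
  qed
  moreover have "a \<le> p x" if "(x, a) \<in> G'" for x a
    using that dominated_extension_step[OF hom G c] unfolding G'_iff by auto
  moreover have "G \<subset> G'"
  proof -
    have "(x, a) + (0, 0) \<in> G'" if "(x, a) \<in> G" for x a
      unfolding G'_iff using that by force
    moreover have "(0, 0) + (z, c) \<in> G'"
      unfolding G'_iff using subspace_0[OF sG] by (force simp: zero_prod_def)
    ultimately show ?thesis using z by auto
  qed
  ultimately show ?thesis
    unfolding dominated_linear_graph_def by blast
qed

lemma dominated_linear_graph_span:
  fixes p :: "'a::real_vector \<Rightarrow> real"
  assumes subadd: "\<And>x y. p (x + y) \<le> p x + p y"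
    and hom: "\<And>t x. 0 < t \<Longrightarrow> p (t *\<^sub>R x) = t * p x"
  shows "dominated_linear_graph p (span {(w, p w)})"
proof -
  have p0: "p 0 = 0" using hom[of 2 0] by simp
  have below: "t * p w \<le> p (t *\<^sub>R w)" for t
  proof -
    consider "t = 0" | "t > 0" | "t < 0" by linarith
    then show ?thesis
    proof cases
      case 3
      have "0 \<le> p w + p (- w)" using subadd[of w "- w"] p0 by simp
      then have "t * (p w + p (- w)) \<le> 0" using 3 by (simp add: mult_nonpos_nonneg)
      then have "t * p w \<le> (- t) * p (- w)" by (simp add: algebra_simps)
      then show ?thesis using hom[of "- t" "- w"] 3 by simp
    qed (use p0 hom in auto)
  qed
  have "a = 0" if "(0, a) = t *\<^sub>R (w, p w)" for a t
    using that p0 by (cases "w = 0") auto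
  moreover have "a \<le> p x" if "(x, a) = t *\<^sub>R (w, p w)" for x a t
    using that below by simp
  ultimately show ?thesis
    unfolding dominated_linear_graph_def span_singleton
    using subspace_span[of "{(w, p w)}"] span_singleton[of "(w, p w)"] by fastforce
qed

lemma dominated_linear_graph_Union_chain:
  assumes "\<C> \<noteq> {}" "subset.chain {G. dominated_linear_graph p G} \<C>"
  shows "dominated_linear_graph p (\<Union>\<C>)"
proof -
  have G: "\<And>G. G \<in> \<C> \<Longrightarrow> dominated_linear_graph p G"
    and chain: "\<And>G H. G \<in> \<C> \<Longrightarrow> H \<in> \<C> \<Longrightarrow> G \<subseteq> H \<or> H \<subseteq> G"
    using assms(2) unfolding subset.chain_def by auto
  have "subspace (\<Union>\<C>)"
  proof (rule subspaceI)
    show "0 \<in> \<Union>\<C>"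
      using assms(1) G subspace_0 unfolding dominated_linear_graph_def by blast
  next
    fix u v assume "u \<in> \<Union>\<C>" "v \<in> \<Union>\<C>"
    then obtain G where "G \<in> \<C>" "u \<in> G" "v \<in> G" using chain by blast
    then show "u + v \<in> \<Union>\<C>"
      using G subspace_add unfolding dominated_linear_graph_def by blast
  next
    fix c u assume "u \<in> \<Union>\<C>"
    then show "c *\<^sub>R u \<in> \<Union>\<C>"
      using G subspace_scale unfolding dominated_linear_graph_def by blast
  qed
  then show ?thesis
    using G unfolding dominated_linear_graph_def by blast
qed

lemma dominated_linear_graph_total:
  assumes M: "dominated_linear_graph p M" and total: "\<And>x. \<exists>a. (x, a) \<in> M"
  obtains F where "linear F" "\<And>x. F x \<le> p x" "\<And>x a. (x, a) \<in> M \<longleftrightarrow> a = F x"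
proof -
  define F where "F x = (THE a. (x, a) \<in> M)" for x
  have F: "(x, a) \<in> M \<longleftrightarrow> a = F x" for x a
  proof -
    have "\<exists>!a. (x, a) \<in> M"
      using total dominated_linear_graph_functional[OF M] by (intro ex_ex1I)
    then have "(x, F x) \<in> M"
      unfolding F_def by (rule theI')
    then show ?thesis
      using dominated_linear_graph_functional[OF M] by auto
  qed
  have graph: "(x, F x) \<in> M" for x
    using F by simp
  have sM: "subspace M" and below: "\<And>x a. (x, a) \<in> M \<Longrightarrow> a \<le> p x"
    using M unfolding dominated_linear_graph_def by auto
  have "linear F"
  proof (rule linearI)
    show "F (x + y) = F x + F y" for x y
      using subspace_add[OF sM graph graph, of x y] F by simp
    show "F (c *\<^sub>R x) = c *\<^sub>R F x" for c x
      using subspace_scale[OF sM graph, of c x] F by simp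
  qed
  then show ?thesis using that below[OF graph] F by blast
qed

theorem hahn_banach_sublinear:
  fixes p :: "'a::real_vector \<Rightarrow> real"
  assumes subadd: "\<And>x y. p (x + y) \<le> p x + p y"
    and hom: "\<And>t x. 0 < t \<Longrightarrow> p (t *\<^sub>R x) = t * p x"
  shows "\<exists>F. linear F \<and> (\<forall>x. F x \<le> p x) \<and> F w = p w"
proof -
  define \<A> where "\<A> = {G. dominated_linear_graph p G \<and> (w, p w) \<in> G}"
  have "span {(w, p w)} \<in> \<A>"
    unfolding \<A>_def using dominated_linear_graph_span[OF subadd hom] span_base by blast
  moreover have "\<Union>\<C> \<in> \<A>" if ne: "\<C> \<noteq> {}" and ch: "subset.chain \<A> \<C>" for \<C>
  proof -
    have "subset.chain {G. dominated_linear_graph p G} \<C>"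
      using ch unfolding subset.chain_def \<A>_def by blast
    then have "dominated_linear_graph p (\<Union>\<C>)"
      using dominated_linear_graph_Union_chain ne by blast
    moreover have "(w, p w) \<in> \<Union>\<C>"
      using ne ch unfolding subset.chain_def \<A>_def by blast
    ultimately show ?thesis unfolding \<A>_def by blast
  qed
  ultimately obtain M where "M \<in> \<A>" and max: "\<And>G. G \<in> \<A> \<Longrightarrow> M \<subseteq> G \<Longrightarrow> G = M"
    using subset_Zorn_nonempty[of \<A>] by blast
  then have M: "dominated_linear_graph p M" "(w, p w) \<in> M" unfolding \<A>_def by auto
  have "\<exists>a. (x, a) \<in> M" for x
  proof (rule ccontr)
    assume "\<nexists>a. (x, a) \<in> M"
    then obtain M' where "dominated_linear_graph p M'" "M \<subset> M'"
      using dominated_linear_graph_extend[OF subadd hom M(1)] by blast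
    then show False
      using max[of M'] M(2) unfolding \<A>_def by blast
  qed
  then obtain F where F: "linear F" "\<And>x. F x \<le> p x" "\<And>x a. (x, a) \<in> M \<longleftrightarrow> a = F x"
    using dominated_linear_graph_total[OF M(1)] by blast
  have "F w = p w" using F(3) M(2) by simp
  then show ?thesis using F(1,2) by blast
qed

section \<open>Absorbing sets and the Minkowski functional\<close>

definition absorbing :: "'a::real_vector set \<Rightarrow> bool" where
  "absorbing K \<longleftrightarrow> (\<forall>w. \<exists>e>0. e *\<^sub>R w \<in> K)"

definition minkowski_functional :: "'a::real_vector set \<Rightarrow> 'a \<Rightarrow> real" where
  "minkowski_functional K w = Inf {l. 0 < l \<and> inverse l *\<^sub>R w \<in> K}"

lemma minkowski_functional_le:
  assumes "0 < l" "inverse l *\<^sub>R w \<in> K"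
  shows "minkowski_functional K w \<le> l"
proof -
  have "bdd_below {l. 0 < l \<and> inverse l *\<^sub>R w \<in> K}"
    by (rule bdd_belowI[of _ 0]) simp
  then show ?thesis
    unfolding minkowski_functional_def using assms by (intro cInf_lower) auto
qed

context
  fixes K :: "'a::real_vector set"
  assumes K_convex: "convex K" and K_zero: "0 \<in> K" and K_absorbing: "absorbing K"
begin

lemma minkowski_functional_approx:
  assumes "minkowski_functional K w < m"
  obtains l where "0 < l" "l < m" "inverse l *\<^sub>R w \<in> K"
proof -
  obtain e where "e > 0" "e *\<^sub>R w \<in> K" using K_absorbing unfolding absorbing_def by blast
  then have "inverse e \<in> {l. 0 < l \<and> inverse l *\<^sub>R w \<in> K}" by simp
  then have "{l. 0 < l \<and> inverse l *\<^sub>R w \<in> K} \<noteq> {}" by blast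
  from cInf_lessD[OF this assms[unfolded minkowski_functional_def]] show ?thesis
    using that by blast
qed

lemma minkowski_functional_less_one_imp_mem:
  assumes "minkowski_functional K w < 1"
  shows "w \<in> K"
proof -
  obtain l where l: "0 < l" "l < 1" "inverse l *\<^sub>R w \<in> K"
    using minkowski_functional_approx[OF assms] by blast
  have "l *\<^sub>R (inverse l *\<^sub>R w) + (1 - l) *\<^sub>R 0 \<in> K"
    using convexD[OF K_convex l(3) K_zero, of l "1 - l"] l by simp
  then show ?thesis using l by simp
qed

lemma minkowski_functional_subadditive:
  "minkowski_functional K (x + y) \<le> minkowski_functional K x + minkowski_functional K y"
proof (rule field_le_epsilon)
  fix e :: real assume e: "0 < e"
  obtain l where l: "0 < l" "l < minkowski_functional K x + e / 2" "inverse l *\<^sub>R x \<in> K"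
    using minkowski_functional_approx[of x "minkowski_functional K x + e / 2"] e by auto
  obtain m where m: "0 < m" "m < minkowski_functional K y + e / 2" "inverse m *\<^sub>R y \<in> K"
    using minkowski_functional_approx[of y "minkowski_functional K y + e / 2"] e by auto
  have "(l / (l + m)) *\<^sub>R (inverse l *\<^sub>R x) + (m / (l + m)) *\<^sub>R (inverse m *\<^sub>R y) \<in> K"
    using convexD[OF K_convex l(3) m(3), of "l / (l + m)" "m / (l + m)"] l(1) m(1)
    by (simp add: add_divide_distrib[symmetric])
  also have "(l / (l + m)) *\<^sub>R (inverse l *\<^sub>R x) + (m / (l + m)) *\<^sub>R (inverse m *\<^sub>R y)
      = inverse (l + m) *\<^sub>R (x + y)"
    using l(1) m(1) by (simp add: field_simps scaleR_add_right)
  finally have "minkowski_functional K (x + y) \<le> l + m"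
    using l(1) m(1) by (intro minkowski_functional_le) auto
  then show "minkowski_functional K (x + y) \<le> minkowski_functional K x + minkowski_functional K y + e"
    using l(2) m(2) by linarith
qed

lemma minkowski_functional_le_scaleR:
  assumes "0 < t"
  shows "minkowski_functional K (t *\<^sub>R x) \<le> t * minkowski_functional K x"
proof (rule field_le_epsilon)
  fix e :: real assume e: "0 < e"
  obtain l where l: "0 < l" "l < minkowski_functional K x + e / t" "inverse l *\<^sub>R x \<in> K"
    using minkowski_functional_approx[of x "minkowski_functional K x + e / t"] e assms by auto
  have "inverse (t * l) *\<^sub>R (t *\<^sub>R x) = inverse l *\<^sub>R x" using assms by simp
  then have "inverse (t * l) *\<^sub>R (t *\<^sub>R x) \<in> K" using l(3) by metis
  then have "minkowski_functional K (t *\<^sub>R x) \<le> t * l"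
    using l(1) assms by (intro minkowski_functional_le) auto
  also have "\<dots> \<le> t * minkowski_functional K x + e"
    using l(2) assms by (simp add: field_simps)
  finally show "minkowski_functional K (t *\<^sub>R x) \<le> t * minkowski_functional K x + e" .
qed

lemma minkowski_functional_scaleR:
  assumes "0 < t"
  shows "minkowski_functional K (t *\<^sub>R x) = t * minkowski_functional K x"
proof (rule antisym)
  have "minkowski_functional K x \<le> inverse t * minkowski_functional K (t *\<^sub>R x)"
    using minkowski_functional_le_scaleR[of "inverse t" "t *\<^sub>R x"] assms by simp
  then show "t * minkowski_functional K x \<le> minkowski_functional K (t *\<^sub>R x)"
    using assms by (simp add: field_simps)
qed (rule minkowski_functional_le_scaleR[OF assms])

lemma convex_absorbing_separation:
  assumes "w \<notin> K"
  shows "\<exists>F::'a \<Rightarrow> real. linear F \<and> (\<forall>k\<in>K. F k \<le> 1) \<and> 1 \<le> F w"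
proof -
  obtain F where F: "linear F" "\<And>x. F x \<le> minkowski_functional K x"
      "F w = minkowski_functional K w"
    using hahn_banach_sublinear[OF minkowski_functional_subadditive minkowski_functional_scaleR]
    by blast
  have "F k \<le> 1" if "k \<in> K" for k
    using F(2)[of k] minkowski_functional_le[of 1 k K] that by simp
  moreover have "1 \<le> F w"
    using F(3) minkowski_functional_less_one_imp_mem assms by force
  ultimately show ?thesis
    using F(1) by blast
qed

end

lemma absorbing_open:
  fixes S :: "'a::real_normed_vector set"
  assumes "open S" "0 \<in> S"
  shows "absorbing S"
  unfolding absorbing_def
proof
  fix w :: 'a
  obtain \<epsilon> where \<epsilon>: "0 < \<epsilon>" "ball 0 \<epsilon> \<subseteq> S"
    using assms open_contains_ball by blast
  define e where "e = \<epsilon> / (norm w + 1)"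
  have "0 < e" using \<epsilon> by (simp add: e_def add_nonneg_pos)
  have "norm (e *\<^sub>R w) = \<epsilon> * (norm w / (norm w + 1))"
    using \<epsilon> by (simp add: e_def)
  also have "\<dots> < \<epsilon> * 1"
    using \<epsilon>(1) by (intro mult_strict_left_mono) (auto simp: add_nonneg_pos)
  finally show "\<exists>e>0. e *\<^sub>R w \<in> S" using \<open>0 < e\<close> \<epsilon>(2) by force
qed

lemma absorbing_negations:
  assumes "absorbing A"
  shows "absorbing (uminus ` A)"
  unfolding absorbing_def
proof
  fix w
  obtain e where "0 < e" "e *\<^sub>R - w \<in> A" using assms unfolding absorbing_def by blast
  then show "\<exists>e>0. e *\<^sub>R w \<in> uminus ` A" by (intro exI[of _ e]) (auto intro: image_eqI[of _ _ "e *\<^sub>R - w"])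
qed

lemma absorbing_Times:
  assumes "convex A" "0 \<in> A" "absorbing A" "convex B" "0 \<in> B" "absorbing B"
  shows "absorbing (A \<times> B)"
  unfolding absorbing_def
proof
  fix w :: "'a \<times> 'b"
  have shrink: "e *\<^sub>R x \<in> S" if "convex S" "0 \<in> S" "d *\<^sub>R x \<in> S" "0 < e" "e \<le> d"
    for S and x :: "'c::real_vector" and d e
  proof -
    have "(e / d) *\<^sub>R (d *\<^sub>R x) + (1 - e / d) *\<^sub>R 0 \<in> S"
      using convexD[OF that(1,3,2), of "e / d" "1 - e / d"] that(4,5) by simp
    then show ?thesis using that(4,5) by simp
  qed
  obtain a b where a: "0 < a" "a *\<^sub>R fst w \<in> A" and b: "0 < b" "b *\<^sub>R snd w \<in> B"
    using assms unfolding absorbing_def by meson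
  have "min a b *\<^sub>R fst w \<in> A" "min a b *\<^sub>R snd w \<in> B"
    using shrink[OF assms(1,2) a(2)] shrink[OF assms(4,5) b(2)] a(1) b(1) by auto
  then have "min a b *\<^sub>R w \<in> A \<times> B"
    by (simp add: mem_Times_iff)
  then show "\<exists>e>0. e *\<^sub>R w \<in> A \<times> B" using a(1) b(1) by (intro exI[of _ "min a b"]) auto
qed

lemma convex_cone_separation:
  fixes C N :: "'a::real_vector set"
  assumes C: "convex_cone C" and N: "convex N" "0 \<in> N" "absorbing N" and w: "w \<notin> C + N"
  shows "\<exists>F::'a \<Rightarrow> real. linear F \<and> (\<forall>c\<in>C. F c \<le> 0) \<and> (\<forall>n\<in>N. F n \<le> 1) \<and> 1 \<le> F w"
proof -
  have C0: "0 \<in> C" using C convex_cone_contains_0 by blast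
  have CK: "C \<subseteq> C + N" and NK: "N \<subseteq> C + N"
    using set_plus_intro[OF _ N(2)] set_plus_intro[OF C0] by force+
  have "convex (C + N)"
    using C N(1) by (simp add: convex_set_plus convex_cone_def)
  moreover have "0 \<in> C + N" using NK N(2) by blast
  moreover have "absorbing (C + N)"
    using N(3) NK unfolding absorbing_def by blast
  ultimately obtain F :: "'a \<Rightarrow> real" where F: "linear F" "\<And>k. k \<in> C + N \<Longrightarrow> F k \<le> 1" "1 \<le> F w"
    using convex_absorbing_separation w by blast
  have "F c \<le> 0" if c: "c \<in> C" for c
  proof (rule ccontr)
    assume pos: "\<not> F c \<le> 0"
    have "(2 / F c) *\<^sub>R c \<in> C" using convex_cone_scaleR[OF C _ c] pos by simp
    then have "F ((2 / F c) *\<^sub>R c) \<le> 1" using F(2) CK by blast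
    then show False using pos linear_scale[OF F(1)] by simp
  qed
  then show ?thesis using F NK by blast
qed

section \<open>Hausdorff locally convex spaces\<close>

lemma hlcs_topspace: "hlcs T \<Longrightarrow> topspace T = UNIV"
  unfolding hlcs_def by blast

lemma hlcs_continuous_map_add:
  assumes "hlcs T" "continuous_map X T f" "continuous_map X T g"
  shows "continuous_map X T (\<lambda>x. f x + g x)"
proof -
  have "continuous_map (prod_topology T T) T (\<lambda>(x, y). x + y)"
    using assms(1) unfolding hlcs_def by blast
  from continuous_map_compose[OF continuous_map_pairedI[OF assms(2,3)] this]
  show ?thesis by (simp add: o_def)
qed

lemma hlcs_continuous_map_scaleR:
  assumes "hlcs T" "continuous_map X euclideanreal f" "continuous_map X T g"
  shows "continuous_map X T (\<lambda>x. f x *\<^sub>R g x)"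
proof -
  have "continuous_map (prod_topology euclideanreal T) T (\<lambda>(t, x). t *\<^sub>R x)"
    using assms(1) unfolding hlcs_def by blast
  from continuous_map_compose[OF continuous_map_pairedI[OF assms(2,3)] this]
  show ?thesis by (simp add: o_def)
qed

lemma hlcs_continuous_map_affine:
  assumes "hlcs T"
  shows "continuous_map T T (\<lambda>x. c *\<^sub>R x + a)"
  using assms hlcs_topspace[OF assms]
  by (intro hlcs_continuous_map_add hlcs_continuous_map_scaleR) auto

lemma hlcs_absorbing:
  assumes "hlcs T" "openin T V" "0 \<in> V"
  shows "absorbing V"
  unfolding absorbing_def
proof
  fix w
  have "continuous_map euclideanreal T (\<lambda>t. t *\<^sub>R w)"
    using assms(1) hlcs_topspace[OF assms(1)]
    by (intro hlcs_continuous_map_scaleR) auto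
  from openin_continuous_map_preimage[OF this assms(2)]
  have "open {t::real. t *\<^sub>R w \<in> V}" by simp
  then have "absorbing {t::real. t *\<^sub>R w \<in> V}"
    using assms(3) by (intro absorbing_open) auto
  then show "\<exists>e>0. e *\<^sub>R w \<in> V"
    unfolding absorbing_def by (metis mem_Collect_eq mult.right_neutral real_scaleR_def)
qed

lemma linear_continuous_if_bounded_below:
  fixes \<phi> :: "'a::real_vector \<Rightarrow> real"
  assumes T: "hlcs T" and \<phi>: "linear \<phi>"
    and V: "openin T V" "0 \<in> V" "\<And>v. v \<in> V \<Longrightarrow> -1 \<le> \<phi> v"
  shows "continuous_map T euclideanreal \<phi>"
proof -
  have upper: "openin T {x. a < \<phi> x}" for a
  proof (subst openin_subopen, intro ballI)
    fix x assume "x \<in> {x. a < \<phi> x}"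
    define c where "c = (\<phi> x - a) / 2"
    have c: "0 < c" "a < \<phi> x - c" using \<open>x \<in> _\<close> by (auto simp: c_def field_simps)
    define N where "N = {y \<in> topspace T. inverse c *\<^sub>R y + - (inverse c *\<^sub>R x) \<in> V}"
    have "openin T N"
      unfolding N_def by (rule openin_continuous_map_preimage[OF hlcs_continuous_map_affine[OF T] V(1)])
    moreover have "x \<in> N" using V(2) by (simp add: N_def hlcs_topspace[OF T])
    moreover have "N \<subseteq> {x. a < \<phi> x}"
    proof
      fix y assume "y \<in> N"
      then have "-1 \<le> \<phi> (inverse c *\<^sub>R y + - (inverse c *\<^sub>R x))"
        using V(3) unfolding N_def by blast
      also have "\<dots> = \<phi> (inverse c *\<^sub>R (y - x))"
        by (simp add: scaleR_diff_right)
      also have "\<dots> = inverse c * (\<phi> y - \<phi> x)"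
        using linear_scale[OF \<phi>] linear_diff[OF \<phi>] by simp
      finally show "y \<in> {x. a < \<phi> x}" using c by (simp add: field_simps)
    qed
    ultimately show "\<exists>N. openin T N \<and> x \<in> N \<and> N \<subseteq> {x. a < \<phi> x}" by blast
  qed
  have "openin T {x. \<phi> x < a}" for a
  proof -
    have "openin T {x \<in> topspace T. (- 1) *\<^sub>R x + 0 \<in> {x. - a < \<phi> x}}"
      by (rule openin_continuous_map_preimage[OF hlcs_continuous_map_affine[OF T] upper])
    then show ?thesis
      using \<phi> by (simp add: hlcs_topspace[OF T] linear_neg)
  qed
  then show ?thesis
    using upper hlcs_topspace[OF T]
    unfolding continuous_map_upper_lower_semicontinuous_lt by simp
qed

lemma hlcs_lsc_convex_nbhd:
  assumes T: "hlcs T" and "lsc_fun T g" "ereal r < g x0"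
  obtains V where "openin T V" "convex V" "0 \<in> V" "\<And>v. v \<in> V \<Longrightarrow> ereal r < g (x0 + v)"
proof -
  have "closedin T {x \<in> topspace T. g x \<le> ereal r}"
    using assms(2) unfolding lsc_fun_def by blast
  then have "openin T (topspace T - {x \<in> topspace T. g x \<le> ereal r})"
    by (rule openin_diff[OF openin_topspace])
  moreover have "topspace T - {x \<in> topspace T. g x \<le> ereal r} = {x. ereal r < g x}"
    using hlcs_topspace[OF T] by auto
  ultimately have "openin T {x. ereal r < g x}" by simp
  from openin_continuous_map_preimage[OF hlcs_continuous_map_affine[OF T, of 1 x0] this]
  have "openin T {v. ereal r < g (x0 + v)}"
    by (simp add: hlcs_topspace[OF T] add.commute)
  moreover have "0 \<in> {v. ereal r < g (x0 + v)}" using assms(3) by simp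
  ultimately obtain V where "openin T V" "convex V" "0 \<in> V" "V \<subseteq> {v. ereal r < g (x0 + v)}"
    using T unfolding hlcs_def by blast
  then show ?thesis using that by blast
qed

section \<open>Sublinear functions and their subdifferential at zero\<close>

lemma convex_cone_epigraph:
  assumes "sublinear g" "g 0 = 0"
  shows "convex_cone {(x, t). g x \<le> ereal t}"
  unfolding convex_cone_iff
proof (intro conjI ballI allI impI)
  show "0 \<in> {(x, t). g x \<le> ereal t}" using assms(2) by (simp add: zero_prod_def)
next
  fix u v assume "u \<in> {(x, t). g x \<le> ereal t}" "v \<in> {(x, t). g x \<le> ereal t}"
  then obtain x s y t where uv: "u = (x, s)" "v = (y, t)" "g x \<le> ereal s" "g y \<le> ereal t"
    by auto
  have "g (x + y) \<le> g x + g y" using assms(1) unfolding sublinear_def by blast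
  also have "\<dots> \<le> ereal s + ereal t" using uv by (intro add_mono)
  finally show "u + v \<in> {(x, t). g x \<le> ereal t}" using uv by simp
next
  fix u and c :: real assume u: "u \<in> {(x, t). g x \<le> ereal t}" and c: "0 \<le> c"
  show "c *\<^sub>R u \<in> {(x, t). g x \<le> ereal t}"
  proof (cases "c = 0")
    case False
    then have "g (c *\<^sub>R fst u) = ereal c * g (fst u)" using assms(1) c unfolding sublinear_def by simp
    also have "\<dots> \<le> ereal c * ereal (snd u)"
      using u c by (intro ereal_mult_left_mono) (auto simp: case_prod_beta)
    finally show ?thesis by (simp add: case_prod_beta)
  qed (use assms(2) in \<open>simp add: case_prod_beta\<close>)
qed

lemma sublinear_zero:
  assumes T: "hlcs T" and g: "proper_fun g" "lsc_fun T g" "sublinear g"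
  shows "g 0 = 0"
proof -
  have hom: "\<And>x t. 0 < t \<Longrightarrow> g (t *\<^sub>R x) = ereal t * g x"
    using g(3) unfolding sublinear_def by blast
  have "g 0 = ereal 2 * g 0" using hom[of 2 0] by simp
  moreover have "g 0 \<noteq> -\<infinity>" using g(1) unfolding proper_fun_def by blast
  ultimately have "g 0 = 0 \<or> g 0 = \<infinity>" by (cases "g 0") auto
  moreover have "g 0 \<noteq> \<infinity>"
  proof -
    obtain x where "g x \<noteq> \<infinity>" "g x \<noteq> -\<infinity>"
      using g(1) unfolding proper_fun_def by blast
    then obtain a where a: "g x = ereal a" by (cases "g x") auto
    define S where "S = {t. g (t *\<^sub>R x) \<le> ereal \<bar>a\<bar>}"
    have "continuous_map euclideanreal T (\<lambda>t. t *\<^sub>R x)"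
      using T hlcs_topspace[OF T] by (intro hlcs_continuous_map_scaleR) auto
    moreover have "closedin T {y \<in> topspace T. g y \<le> ereal \<bar>a\<bar>}"
      using g(2) unfolding lsc_fun_def by blast
    ultimately have "closed S"
      using closedin_continuous_map_preimage unfolding S_def by (fastforce simp: hlcs_topspace[OF T])
    moreover have "{0<..1} \<subseteq> S"
    proof
      fix t :: real assume t: "t \<in> {0<..1}"
      have "t * a \<le> t * \<bar>a\<bar>" using t by (intro mult_left_mono) auto
      also have "\<dots> \<le> \<bar>a\<bar>" using t by (intro mult_left_le_one_le) auto
      finally show "t \<in> S" using hom[of t x] t a by (simp add: S_def)
    qed
    ultimately have "{0..1} \<subseteq> S"
      using closure_minimal[of "{0<..1}" S] by simp
    then have "0 \<in> S" by auto
    then show ?thesis by (auto simp: S_def)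
  qed
  ultimately show ?thesis by blast
qed

lemma tdual_add: "\<phi> \<in> tdual T \<Longrightarrow> \<psi> \<in> tdual T \<Longrightarrow> (\<lambda>x. \<phi> x + \<psi> x) \<in> tdual T"
  unfolding tdual_def by (auto intro: linear_compose_add continuous_map_add)

lemma tdual_diff: "\<phi> \<in> tdual T \<Longrightarrow> \<psi> \<in> tdual T \<Longrightarrow> (\<lambda>x. \<phi> x - \<psi> x) \<in> tdual T"
  unfolding tdual_def by (auto intro: linear_compose_sub continuous_map_diff)

lemma tdual_scale: "\<phi> \<in> tdual T \<Longrightarrow> (\<lambda>x. c * \<phi> x) \<in> tdual T"
  unfolding tdual_def using linear_compose_scale_right[of \<phi> c]
  by (auto intro: continuous_map_real_mult_left)

lemma subdiff0I:
  assumes "\<phi> \<in> tdual T" "\<And>x t. g x \<le> ereal t \<Longrightarrow> \<phi> x \<le> t"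
  shows "\<phi> \<in> subdiff0 T g"
proof -
  have "ereal (\<phi> x) \<le> g x" for x
  proof (cases "g x")
    case (real t)
    then show ?thesis using assms(2)[of x t] by simp
  next
    case MInf
    then show ?thesis using assms(2)[of x "\<phi> x - 1"] by simp
  qed simp
  then show ?thesis using assms(1) unfolding subdiff0_def by blast
qed

lemma linear_on_prod_real:
  fixes F :: "'a::real_vector \<times> real \<Rightarrow> real"
  assumes "linear F"
  shows "linear (\<lambda>x. F (x, 0))" "F (x, t) = F (x, 0) + F (0, 1) * t"
proof -
  show "linear (\<lambda>x. F (x, 0))"
  proof (rule linearI)
    show "F (a + b, 0) = F (a, 0) + F (b, 0)" for a b
      using linear_add[OF assms, of "(a, 0)" "(b, 0)"] by simp
    show "F (c *\<^sub>R a, 0) = c *\<^sub>R F (a, 0)" for c a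
      using linear_scale[OF assms, of c "(a, 0)"] by simp
  qed
  show "F (x, t) = F (x, 0) + F (0, 1) * t"
    using linear_add[OF assms, of "(x, 0)" "(0, t)"] linear_scale[OF assms, of t "(0, 1)"]
    by (simp add: mult.commute)
qed

lemma sublinear_epigraph_separation_absorbing:
  assumes g: "sublinear g" "g 0 = 0" and V: "convex V" "0 \<in> V" "absorbing V"
    and "r < r'" and above: "\<And>v. v \<in> V \<Longrightarrow> ereal r' < g (x0 + v)"
  obtains \<phi> \<alpha> where "linear \<phi>" "\<And>v. v \<in> V \<Longrightarrow> -1 \<le> \<phi> v" "\<alpha> \<le> 0"
    "\<And>x t. g x \<le> ereal t \<Longrightarrow> \<phi> x + \<alpha> * t \<le> 0" "0 < \<phi> x0 + \<alpha> * r"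
proof -
  define C where "C = {(x, t). g x \<le> ereal t}"
  define N where "N = uminus ` V \<times> {r - r'<..}"
  have N_convex: "convex N"
    unfolding N_def by (intro convex_Times convex_negations V(1)) simp
  have "0 \<in> uminus ` V" using V(2) image_eqI[of 0 uminus 0] by simp
  then have N_zero: "0 \<in> N"
    using \<open>r < r'\<close> by (simp add: N_def zero_prod_def)
  have "absorbing {r - r'<..}"
    using \<open>r < r'\<close> by (intro absorbing_open) auto
  then have N_absorbing: "absorbing N"
    unfolding N_def using \<open>0 \<in> uminus ` V\<close> \<open>r < r'\<close>
    by (intro absorbing_Times convex_negations absorbing_negations V) auto
  have "(x0, r) \<notin> C + N"
  proof
    assume "(x0, r) \<in> C + N"
    then obtain x t v s where "g x \<le> ereal t" "v \<in> V" "r - r' < s" "(x0, r) = (x, t) + (- v, s)"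
      unfolding C_def N_def set_plus_def by auto
    then have "g (x0 + v) \<le> ereal t" "t < r'" by (auto simp: algebra_simps)
    then show False using above[OF \<open>v \<in> V\<close>] by (metis ereal_less_eq(3) less_le_not_le order_trans)
  qed
  from convex_cone_separation[OF convex_cone_epigraph[OF g] N_convex N_zero N_absorbing,
      folded C_def, OF this]
  obtain F :: "'a \<times> real \<Rightarrow> real" where F: "linear F" "\<And>c. c \<in> C \<Longrightarrow> F c \<le> 0"
    "\<And>n. n \<in> N \<Longrightarrow> F n \<le> 1" "1 \<le> F (x0, r)"
    by blast
  note F_split = linear_on_prod_real[OF F(1)]
  show ?thesis
  proof (rule that[OF F_split(1)])
    show "-1 \<le> F (v, 0)" if "v \<in> V" for v
    proof -
      have "- v \<in> uminus ` V" using that by (rule imageI)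
      then have "F (- v, 0) \<le> 1" using F(3) \<open>r < r'\<close> by (simp add: N_def)
      moreover have "F (- v, 0) = - F (v, 0)" using linear_neg[OF F_split(1), of v] by simp
      ultimately show ?thesis by simp
    qed
    show "F (0, 1) \<le> 0" using F(2)[of "(0, 1)"] g(2) by (simp add: C_def)
    show "F (x, 0) + F (0, 1) * t \<le> 0" if "g x \<le> ereal t" for x t
      using F(2)[of "(x, t)"] that F_split(2)[of x t] by (simp add: C_def)
    show "0 < F (x0, 0) + F (0, 1) * r" using F(4) F_split(2)[of x0 r] by simp
  qed
qed

lemma sublinear_epigraph_separation:
  assumes T: "hlcs T" and g: "sublinear g" "g 0 = 0" "lsc_fun T g" and r: "ereal r < g x0"
  obtains \<phi> \<alpha> where "\<phi> \<in> tdual T" "\<alpha> \<le> 0" "\<And>x t. g x \<le> ereal t \<Longrightarrow> \<phi> x + \<alpha> * t \<le> 0"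
    "0 < \<phi> x0 + \<alpha> * r"
proof -
  obtain r' where r': "ereal r < ereal r'" "ereal r' < g x0"
    using ereal_dense2[OF r] by blast
  obtain V where V: "openin T V" "convex V" "0 \<in> V" "\<And>v. v \<in> V \<Longrightarrow> ereal r' < g (x0 + v)"
    using hlcs_lsc_convex_nbhd[OF T g(3) r'(2)] by blast
  have "r < r'" using r'(1) by simp
  obtain \<phi> \<alpha> where sep: "linear \<phi>" "\<And>v. v \<in> V \<Longrightarrow> -1 \<le> \<phi> v" "\<alpha> \<le> 0"
    "\<And>x t. g x \<le> ereal t \<Longrightarrow> \<phi> x + \<alpha> * t \<le> 0" "0 < \<phi> x0 + \<alpha> * r"
    using sublinear_epigraph_separation_absorbing[OF g(1,2) V(2,3) hlcs_absorbing[OF T V(1,3)]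
        \<open>r < r'\<close> V(4)]
    by blast
  have "\<phi> \<in> tdual T"
    unfolding tdual_def using linear_continuous_if_bounded_below[OF T sep(1) V(1,3) sep(2)] sep(1)
    by blast
  then show ?thesis using that sep(3-5) by blast
qed

lemma normalized_separator_in_subdiff0:
  assumes "\<phi> \<in> tdual T" "\<alpha> < 0" "\<And>x t. g x \<le> ereal t \<Longrightarrow> \<phi> x + \<alpha> * t \<le> 0"
  shows "(\<lambda>x. (- 1 / \<alpha>) * \<phi> x) \<in> subdiff0 T g"
proof (rule subdiff0I)
  show "(\<lambda>x. (- 1 / \<alpha>) * \<phi> x) \<in> tdual T" using assms(1) by (rule tdual_scale)
  show "(- 1 / \<alpha>) * \<phi> x \<le> t" if "g x \<le> ereal t" for x t
    using assms(3)[OF that] assms(2) by (simp add: field_simps)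
qed

lemma subdiff0_nonempty:
  assumes "hlcs T" "sublinear g" "g 0 = 0" "lsc_fun T g"
  obtains u where "u \<in> subdiff0 T g"
proof -
  have "ereal (- 1) < g 0" using assms(3) by simp
  then obtain \<phi> \<alpha> where sep: "\<phi> \<in> tdual T" "\<alpha> \<le> 0"
    "\<And>x t. g x \<le> ereal t \<Longrightarrow> \<phi> x + \<alpha> * t \<le> 0" "0 < \<phi> 0 + \<alpha> * (- 1)"
    by (rule sublinear_epigraph_separation[OF assms]) blast
  have "\<alpha> < 0" using sep(1,4) unfolding tdual_def by (simp add: linear_0)
  then show ?thesis using normalized_separator_in_subdiff0[OF sep(1) _ sep(3)] that by blast
qed

lemma subdiff0_add_vertical:
  assumes u: "u \<in> subdiff0 T g" and \<phi>: "\<phi> \<in> tdual T" "\<And>x t. g x \<le> ereal t \<Longrightarrow> \<phi> x \<le> 0"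
    and "0 \<le> c"
  shows "(\<lambda>x. u x + c * \<phi> x) \<in> subdiff0 T g"
proof (rule subdiff0I)
  show "(\<lambda>x. u x + c * \<phi> x) \<in> tdual T"
    using u \<phi>(1) by (intro tdual_add tdual_scale) (auto simp: subdiff0_def)
  show "u x + c * \<phi> x \<le> t" if "g x \<le> ereal t" for x t
  proof -
    have "ereal (u x) \<le> ereal t" using u that unfolding subdiff0_def by (blast intro: order_trans)
    moreover have "c * \<phi> x \<le> 0"
      using \<phi>(2)[OF that] \<open>0 \<le> c\<close> by (simp add: mult_nonneg_nonpos)
    ultimately show ?thesis by simp
  qed
qed

lemma exists_subdiff0_gt:
  assumes T: "hlcs T" and g: "sublinear g" "g 0 = 0" "lsc_fun T g" and r: "ereal r < g x0"
  obtains u where "u \<in> subdiff0 T g" "r < u x0"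
proof -
  obtain \<phi> \<alpha> where sep: "\<phi> \<in> tdual T" "\<alpha> \<le> 0" "\<And>x t. g x \<le> ereal t \<Longrightarrow> \<phi> x + \<alpha> * t \<le> 0"
    "0 < \<phi> x0 + \<alpha> * r"
    by (rule sublinear_epigraph_separation[OF T g r]) blast
  show ?thesis
  proof (cases "\<alpha> < 0")
    case True
    then have "r < (- 1 / \<alpha>) * \<phi> x0" using sep(4) by (simp add: field_simps)
    then show ?thesis using normalized_separator_in_subdiff0[OF sep(1) True sep(3)] that by blast
  next
    case False
    \<comment> \<open>The separating hyperplane is vertical; tilt an arbitrary element of \<open>\<partial>g(0)\<close> by it.\<close>
    then have \<phi>_x0: "0 < \<phi> x0" and \<phi>_dom: "\<And>x t. g x \<le> ereal t \<Longrightarrow> \<phi> x \<le> 0"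
      using sep(2,3,4) by auto
    obtain u\<^sub>0 where u\<^sub>0: "u\<^sub>0 \<in> subdiff0 T g" using subdiff0_nonempty[OF T g] by blast
    define c where "c = (\<bar>r - u\<^sub>0 x0\<bar> + 1) / \<phi> x0"
    have "0 \<le> c" using \<phi>_x0 by (simp add: c_def)
    have "r < u\<^sub>0 x0 + c * \<phi> x0"
      using \<phi>_x0 by (simp add: c_def)
    moreover have "(\<lambda>x. u\<^sub>0 x + c * \<phi> x) \<in> subdiff0 T g"
      using u\<^sub>0 sep(1) \<phi>_dom \<open>0 \<le> c\<close> by (rule subdiff0_add_vertical)
    ultimately show ?thesis using that by blast
  qed
qed

lemma sublinear_le_iff_subdiff0:
  assumes "hlcs T" "sublinear g" "g 0 = 0" "lsc_fun T g"
  shows "g x \<le> ereal c \<longleftrightarrow> (\<forall>u\<in>subdiff0 T g. u x \<le> c)"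
proof
  show "\<forall>u\<in>subdiff0 T g. u x \<le> c" if "g x \<le> ereal c"
  proof
    fix u assume "u \<in> subdiff0 T g"
    then have "ereal (u x) \<le> g x" unfolding subdiff0_def by blast
    from order_trans[OF this that] show "u x \<le> c" by simp
  qed
  show "g x \<le> ereal c" if "\<forall>u\<in>subdiff0 T g. u x \<le> c"
  proof (rule ccontr)
    assume "\<not> g x \<le> ereal c"
    then obtain u where "u \<in> subdiff0 T g" "c < u x"
      using exists_subdiff0_gt[OF assms, of c x] by force
    then show False using that by force
  qed
qed

section \<open>The subspaces \<open>L\<^sub>x\<^sub>*\<close>\<close>

lemma subspace_perp:
  assumes "\<And>b. b \<in> B \<Longrightarrow> linear b"
  shows "subspace (perp B)"
  using assms unfolding perp_def
  by (intro subspaceI) (auto simp: linear_0 linear_add linear_scale)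

lemma closedin_perp:
  assumes "topspace T = UNIV" "\<And>b. b \<in> B \<Longrightarrow> continuous_map T euclideanreal b"
  shows "closedin T (perp B)"
proof -
  have closed: "closedin T {x \<in> topspace T. b x = 0}" if "b \<in> B" for b
    using closedin_continuous_map_preimage[OF assms(2)[OF that], of "{0}"] by simp
  have "perp B = \<Inter> (insert (topspace T) ((\<lambda>b. {x \<in> topspace T. b x = 0}) ` B))"
    using assms(1) unfolding perp_def by auto
  also have "closedin T \<dots>"
  proof (rule closedin_Inter)
    fix K assume "K \<in> insert (topspace T) ((\<lambda>b. {x \<in> topspace T. b x = 0}) ` B)"
    then show "closedin T K" using closed by auto
  qed simp
  finally show ?thesis .
qed

lemma mem_perp_diffs_iff:
  "x \<in> perp {(\<lambda>x. u x - c x) | u. u \<in> D} \<longleftrightarrow> (\<forall>u\<in>D. u x = c x)"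
  unfolding perp_def by fastforce

lemma mem_perp_pairwise_diffs_iff:
  "x \<in> perp {(\<lambda>x. a x - b x) | a b. a \<in> D \<and> b \<in> D} \<longleftrightarrow> (\<forall>a\<in>D. \<forall>b\<in>D. a x = b x)"
  unfolding perp_def by fastforce

lemma Lset_eq_le:
  assumes "sublinear g" "g 0 = 0"
  shows "Lset g xs = {x. g x \<le> ereal (xs x) \<and> g (- x) \<le> ereal (- xs x)}"
proof (intro set_eqI iffI)
  fix x assume le: "x \<in> {x. g x \<le> ereal (xs x) \<and> g (- x) \<le> ereal (- xs x)}"
  have "g (x + - x) \<le> g x + g (- x)"
    using assms(1) unfolding sublinear_def by blast
  then have "0 \<le> g x + g (- x)" using assms(2) by simp
  then show "x \<in> Lset g xs"
    using le unfolding Lset_def by (cases "g x"; cases "g (- x)") auto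
qed (simp add: Lset_def)

lemma sublinear_add_Lset:
  assumes "sublinear g" "u \<in> Lset g xs"
  shows "g (x + u) = g x + ereal (xs u)"
proof (rule antisym)
  have subadd: "g (a + b) \<le> g a + g b" for a b using assms(1) unfolding sublinear_def by blast
  show "g (x + u) \<le> g x + ereal (xs u)"
    using subadd[of x u] assms(2) unfolding Lset_def by simp
  have "g x + ereal (xs u) \<le> (g (x + u) + ereal (- xs u)) + ereal (xs u)"
    using subadd[of "x + u" "- u"] assms(2) unfolding Lset_def by (simp add: add_right_mono)
  also have "\<dots> = g (x + u)" by (cases "g (x + u)") auto
  finally show "g x + ereal (xs u) \<le> g (x + u)" .
qed

lemma Lset_eq_perp:
  assumes T: "hlcs T" and g: "g \<in> Gamma T" "sublinear g"
  shows "Lset g xs = perp {(\<lambda>x. u x - xs x) | u. u \<in> subdiff0 T g}"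
proof (intro set_eqI iffI)
  have g0: "g 0 = 0" using sublinear_zero[OF T _ _ g(2)] g(1) unfolding Gamma_def by blast
  have lsc: "lsc_fun T g" using g(1) unfolding Gamma_def by blast
  have sub: "u \<in> subdiff0 T g \<Longrightarrow> ereal (u x) \<le> g x \<and> u (- x) = - u x" for u x
    unfolding subdiff0_def tdual_def by (auto simp: linear_neg)
  fix x
  show "x \<in> perp {(\<lambda>x. u x - xs x) | u. u \<in> subdiff0 T g}" if L: "x \<in> Lset g xs"
  proof -
    have "u x = xs x" if u: "u \<in> subdiff0 T g" for u
    proof -
      have "ereal (u x) \<le> ereal (xs x)" "ereal (- u x) \<le> ereal (- xs x)"
        using sub[OF u, of x] sub[OF u, of "- x"] L unfolding Lset_def by auto
      then show ?thesis by simp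
    qed
    then show ?thesis unfolding mem_perp_diffs_iff by blast
  qed
  assume "x \<in> perp {(\<lambda>x. u x - xs x) | u. u \<in> subdiff0 T g}"
  then have eq: "\<And>u. u \<in> subdiff0 T g \<Longrightarrow> u x = xs x"
    unfolding mem_perp_diffs_iff by blast
  have "g x \<le> ereal (xs x)" "g (- x) \<le> ereal (- xs x)"
    unfolding sublinear_le_iff_subdiff0[OF T g(2) g0 lsc] using eq sub by simp_all
  then show "x \<in> Lset g xs" using Lset_eq_le[OF g(2) g0] by blast
qed

lemma mem_Lset_iff:
  assumes "hlcs T" "g \<in> Gamma T" "sublinear g"
  shows "x \<in> Lset g xs \<longleftrightarrow> (\<forall>u\<in>subdiff0 T g. u x = xs x)"
  by (simp only: Lset_eq_perp[OF assms] mem_perp_diffs_iff)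

lemma closed_subspace_Lset:
  assumes T: "hlcs T" and g: "g \<in> Gamma T" "sublinear g" and xs: "xs \<in> tdual T"
  shows "subspace (Lset g xs) \<and> closedin T (Lset g xs)"
proof -
  have "b \<in> tdual T" if b: "b \<in> {(\<lambda>x. u x - xs x) | u. u \<in> subdiff0 T g}" for b
  proof -
    obtain u where "u \<in> subdiff0 T g" "b = (\<lambda>x. u x - xs x)" using b by blast
    then show ?thesis using tdual_diff xs unfolding subdiff0_def by blast
  qed
  then show ?thesis
    unfolding Lset_eq_perp[OF T g] tdual_def
    using subspace_perp closedin_perp[OF hlcs_topspace[OF T]] by blast
qed

lemma Lset_subdiff0_eq_perp:
  assumes "hlcs T" "g \<in> Gamma T" "sublinear g" and us: "us \<in> subdiff0 T g"
  shows "Lset g us = perp {(\<lambda>x. a x - b x) | a b. a \<in> subdiff0 T g \<and> b \<in> subdiff0 T g}"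
  unfolding set_eq_iff mem_perp_pairwise_diffs_iff mem_Lset_iff[OF assms(1-3)]
proof (intro allI iffI ballI)
  fix x a b assume "\<forall>u\<in>subdiff0 T g. u x = us x" "a \<in> subdiff0 T g" "b \<in> subdiff0 T g"
  then have "a x = us x" "b x = us x" by blast+
  then show "a x = b x" by simp
next
  fix x u assume "\<forall>a\<in>subdiff0 T g. \<forall>b\<in>subdiff0 T g. a x = b x" "u \<in> subdiff0 T g"
  then show "u x = us x" using us by blast
qed

lemma Lset_subset_Lset_subdiff0:
  assumes "hlcs T" "g \<in> Gamma T" "sublinear g" and us: "us \<in> subdiff0 T g"
  shows "Lset g xs \<subseteq> Lset g us"
proof
  fix x assume "x \<in> Lset g xs"
  then have eq: "\<And>u. u \<in> subdiff0 T g \<Longrightarrow> u x = xs x"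
    using mem_Lset_iff[OF assms(1-3)] by blast
  show "x \<in> Lset g us"
    unfolding mem_Lset_iff[OF assms(1-3)] using eq eq[OF us] by simp
qed

theorem proposition4:
  fixes T :: "'a::real_vector topology" and g :: "'a \<Rightarrow> ereal"
  assumes "hlcs T" and "\<exists>x::'a. x \<noteq> 0"
    and "g \<in> Gamma T" and "sublinear g"
  shows "(\<forall>xs\<in>tdual T.
            subspace (Lset g xs) \<and> closedin T (Lset g xs)
          \<and> Lset g xs = {x. g x \<le> ereal (xs x) \<and> g (- x) \<le> ereal (- xs x)}
          \<and> Lset g xs = perp {(\<lambda>x. u x - xs x) | u. u \<in> subdiff0 T g}
          \<and> (\<forall>x. \<forall>u\<in>Lset g xs. g (x + u) = g x + ereal (xs u)))
       \<and> (\<forall>us\<in>subdiff0 T g.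
            Lset g us = perp {(\<lambda>x. a x - b x) | a b. a \<in> subdiff0 T g \<and> b \<in> subdiff0 T g})
       \<and> (\<forall>xs\<in>tdual T. \<forall>us\<in>subdiff0 T g. Lset g xs \<subseteq> Lset g us)
       \<and> (\<forall>us\<in>subdiff0 T g. \<forall>vs\<in>subdiff0 T g. Lset g us = Lset g vs)"
proof -
  note T = assms(1) and g = assms(3,4)
  have g0: "g 0 = 0" using sublinear_zero[OF T _ _ g(2)] g(1) unfolding Gamma_def by blast
  show ?thesis
    using closed_subspace_Lset[OF T g] Lset_eq_le[OF g(2) g0] Lset_eq_perp[OF T g]
      sublinear_add_Lset[OF g(2)] Lset_subdiff0_eq_perp[OF T g] Lset_subset_Lset_subdiff0[OF T g]
    by simp
qed

end
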